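(* Let $p$ be an odd prime, $m\ge3$ odd, $k\ge1$ with $\gcd(m,k)=1$. Fix $v\in\mathbb{F}_{p^m}^*$. As $u$ runs through $\mathbb{F}_{p^m}$, $D(u,v)$ takes only the values $0$, $(p-1)p^{\frac{m+1}{2}}$, $-(p-1)p^{\frac{m+1}{2}}$, and these occur respectively $p^m-p^{m-1}$, $\frac12(p^{m-1}+p^{\frac{m-1}{2}})$, and $\frac12(p^{m-1}-p^{\frac{m-1}{2}})$ times.
   Context: $\mathrm{Tr}$ is the trace from $\mathbb{F}_{p^m}$ to $\mathbb{F}_p$ and $\zeta_p=e^{2\pi i/p}$. For $(u,v)\in\mathbb{F}_{p^m}^2$, $D(u,v)=\sum_{y\in\mathbb{F}_p^*}\sum_{x\in\mathbb{F}_{p^m}}\zeta_p^{y\,\mathrm{Tr}(ux^2+vx^{p^k+1})}$. *)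

theory Defs
  imports "HOL-Analysis.Analysis"
begin

text \<open>The finite field F_{p^m} is modelled by a finite field type 'a with CARD('a) = p^m.
  Absolute trace Tr(x) = x + x^p + ... + x^(p^(m-1)), an element of the prime field.\<close>

definition ftrace :: "nat \<Rightarrow> nat \<Rightarrow> 'a::field \<Rightarrow> 'a" where
  "ftrace p m x = (\<Sum>i<m. x ^ (p ^ i))"

text \<open>Identification of the prime field F_p with {0..p-1}: the unique t < p with of_nat t = Tr(x).\<close>
definition trace_nat :: "nat \<Rightarrow> nat \<Rightarrow> 'a::field \<Rightarrow> nat" where
  "trace_nat p m x = (THE t. t < p \<and> of_nat t = ftrace p m x)"

definition zeta :: "nat \<Rightarrow> complex" where
  "zeta p = exp (2 * of_real pi * \<i> / of_nat p)"

definition Dsum :: "nat \<Rightarrow> nat \<Rightarrow> nat \<Rightarrow> 'a::{field,finite} \<Rightarrow> 'a \<Rightarrow> complex" where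
  "Dsum p m k u v = (\<Sum>y\<in>{1..<p}. \<Sum>x\<in>(UNIV::'a set).
      zeta p ^ (y * trace_nat p m (u * x ^ 2 + v * x ^ (p ^ k + 1))))"

end

theory Submission
  imports Defs "HOL-Number_Theory.Residues" "HOL-Computational_Algebra.Polynomial"
begin

(*
  Let S(a,b) = sum_x psi(a x^2 + b x^(p^k+1)), so that D(u,v) = sum_{y in F_p^*} S(yu, yv).
  Squaring and shifting x gives S(a,b) S(-a,-b) = p^m |R|, where R is the radical of the
  quadratic form, i.e. the kernel of the F_p-linear map z |-> 2az + b sigma(z) + sigma^-1(bz)
  with sigma(z) = z^(p^k). Because gcd(m,k) = 1, sigma fixes exactly F_p, and a Moore
  determinant argument shows dim R <= 2. Multiplying y by a square does not change S(yu, yv);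
  writing a non-square as e^2 + f^2 and rotating (x, w) in S^2 shows that the two resulting
  values agree up to sign. Hence D(u,v) is 0 or (p-1) S(u,v), an integer whose square is
  (p-1)^2 p^m |R|; since m is odd this forces |R| = p and D(u,v) = +-(p-1) p^((m+1)/2).
  The multiplicities then follow from the first two moments of D(u,v) over u, which
  orthogonality of psi evaluates.
*)

section \<open>Counting and integer arithmetic\<close>

lemma finite_field_power_card_eq:
  fixes x :: "'b::{field,finite}"
  shows "x ^ CARD('b) = x"
proof (cases "x = 0")
  case False
  let ?U = "UNIV - {0 :: 'b}"
  have "1 * (\<Prod>y\<in>?U. y) = (\<Prod>y\<in>?U. x * y)"
    by (simp, rule prod.reindex_bij_witness[of _ "\<lambda>y. x * y" "\<lambda>y. y / x"]) (use False in auto)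
  also have "\<dots> = x ^ card ?U * (\<Prod>y\<in>?U. y)"
    by (simp add: prod.distrib)
  finally have "x ^ card ?U = 1"
    by (subst (asm) mult_right_cancel) simp_all
  moreover have "Suc (card ?U) = CARD('b)"
    by (rule card_Suc_Diff1) simp_all
  ultimately show ?thesis
    by (metis power_Suc2 mult_1)
qed (simp add: finite_UNIV_card_ge_0)

lemma dvd_iff_eq_0_if_less: "t < p \<Longrightarrow> p dvd t \<longleftrightarrow> t = (0::nat)"
  by (auto dest: dvd_imp_le)

lemma even_exponent_of_square:
  fixes Z c q :: int
  assumes "prime q" "\<not> q dvd c" "Z ^ 2 = c ^ 2 * q ^ j"
  shows "even j"
proof -
  have q: "prime_elem q"
    using assms(1) by (rule prime_imp_prime_elem)
  have "c \<noteq> 0" "Z \<noteq> 0" "q \<noteq> 0"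
    using assms by auto
  have "multiplicity q (Z ^ 2) = 2 * multiplicity q Z"
    using prime_elem_multiplicity_power_distrib[OF q \<open>Z \<noteq> 0\<close>] .
  moreover have "multiplicity q (c ^ 2 * q ^ j) = j"
    using \<open>c \<noteq> 0\<close> \<open>q \<noteq> 0\<close>
    by (simp add: prime_elem_multiplicity_mult_distrib[OF q] prime_elem_multiplicity_power_distrib[OF q]
                  multiplicity_prime_power[OF q] not_dvd_imp_multiplicity_0[OF assms(2)])
  ultimately show ?thesis
    using assms(3) by (metis dvd_triv_left)
qed

lemma square_eq_odd_power_cases:
  fixes Z :: int and q r :: nat
  assumes "prime q" "odd j" "r \<in> {1, q, q ^ 2}" "Z ^ 2 = (int q - 1) ^ 2 * int q ^ j * int r"
  shows "Z = (int q - 1) * int q ^ ((j + 1) div 2) \<or> Z = - ((int q - 1) * int q ^ ((j + 1) div 2))"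
proof -
  have q: "prime (int q)"
    using assms(1) by simp
  have not_dvd: "\<not> int q dvd int q - 1"
  proof
    assume "int q dvd int q - 1"
    from dvd_diff[OF dvd_refl this] have "int q dvd 1"
      by simp
    thus False
      using q not_prime_unit by blast
  qed
  have "r = q"
  proof (rule ccontr)
    assume "r \<noteq> q"
    hence "r = 1 \<or> r = q ^ 2"
      using assms(3) by blast
    moreover have "int q ^ j * int q ^ 2 = int q ^ (j + 2)"
      by (rule power_add[symmetric])
    ultimately have "Z ^ 2 = (int q - 1) ^ 2 * int q ^ j \<or> Z ^ 2 = (int q - 1) ^ 2 * int q ^ (j + 2)"
      using assms(4) by (auto simp: mult.assoc)
    moreover have "odd (j + 2)"
      using assms(2) by simp
    ultimately show False
      using even_exponent_of_square[OF q not_dvd] assms(2) by blast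
  qed
  have "(j + 1) div 2 * 2 = j + 1"
    using assms(2) by presburger
  hence "int q ^ (j + 1) = (int q ^ ((j + 1) div 2)) ^ 2"
    by (simp only: power_mult[symmetric])
  hence "Z ^ 2 = ((int q - 1) * int q ^ ((j + 1) div 2)) ^ 2"
    using assms(4) \<open>r = q\<close> by (simp add: power_mult_distrib mult_ac)
  thus ?thesis
    by (simp add: power2_eq_iff)
qed

lemma three_valued_sum_card:
  fixes D :: "'b \<Rightarrow> 'c::field_char_0"
  assumes "finite U" and "A \<noteq> 0" and trichotomy: "\<And>u. u \<in> U \<Longrightarrow> D u \<in> {0, A, - A}"
    and sum1: "(\<Sum>u\<in>U. D u) = A * of_nat s"
    and sum2: "(\<Sum>u\<in>U. D u ^ 2) = A ^ 2 * of_nat t"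
  shows "card {u\<in>U. D u = A} = card {u\<in>U. D u = - A} + s"
    and "card {u\<in>U. D u = A} + card {u\<in>U. D u = - A} = t"
    and "card {u\<in>U. D u = 0} = card U - t"
proof -
  let ?P = "{u\<in>U. D u = A}" and ?M = "{u\<in>U. D u = - A}" and ?Z = "{u\<in>U. D u = 0}"
  have "A \<noteq> - A"
    using \<open>A \<noteq> 0\<close> by (simp add: eq_neg_iff_add_eq_0 flip: mult_2)
  have D1: "D u = A * (of_bool (D u = A) - of_bool (D u = - A))" if "u \<in> U" for u
    using trichotomy[OF that] \<open>A \<noteq> 0\<close> \<open>A \<noteq> - A\<close> by auto
  have D2: "D u ^ 2 = A ^ 2 * (of_bool (D u = A) + of_bool (D u = - A))" if "u \<in> U" for u
    using trichotomy[OF that] \<open>A \<noteq> 0\<close> \<open>A \<noteq> - A\<close> by auto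
  have "?P = U \<inter> {u. D u = A}" "?M = U \<inter> {u. D u = - A}"
    by auto
  hence count: "(\<Sum>u\<in>U. of_bool (D u = A)) = (of_nat (card ?P) :: 'c)"
      "(\<Sum>u\<in>U. of_bool (D u = - A)) = (of_nat (card ?M) :: 'c)"
    using \<open>finite U\<close> by simp_all
  have "A * of_nat s = (\<Sum>u\<in>U. A * (of_bool (D u = A) - of_bool (D u = - A)))"
    unfolding sum1[symmetric] by (intro sum.cong refl D1)
  also have "\<dots> = A * (of_nat (card ?P) - of_nat (card ?M))"
    by (simp add: sum_subtractf count flip: sum_distrib_left)
  finally have "(of_nat (card ?P) :: 'c) = of_nat (card ?M + s)"
    using \<open>A \<noteq> 0\<close> by simp
  thus "card ?P = card ?M + s"
    using of_nat_eq_iff by blast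
  have "A ^ 2 * of_nat t = (\<Sum>u\<in>U. A ^ 2 * (of_bool (D u = A) + of_bool (D u = - A)))"
    unfolding sum2[symmetric] by (intro sum.cong refl D2)
  also have "\<dots> = A ^ 2 * (of_nat (card ?P) + of_nat (card ?M))"
    by (simp add: sum.distrib count flip: sum_distrib_left)
  finally have "(of_nat (card ?P + card ?M) :: 'c) = of_nat t"
    using \<open>A \<noteq> 0\<close> by simp
  thus P_plus_M: "card ?P + card ?M = t"
    using of_nat_eq_iff by blast
  have U_split: "U = (?Z \<union> ?P) \<union> ?M"
    using trichotomy by auto
  have "?Z \<inter> ?P = {}" "(?Z \<union> ?P) \<inter> ?M = {}"
    using \<open>A \<noteq> 0\<close> \<open>A \<noteq> - A\<close> by auto
  hence "card ((?Z \<union> ?P) \<union> ?M) = card ?Z + card ?P + card ?M"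
    using \<open>finite U\<close> by (simp add: card_Un_disjoint)
  thus "card ?Z = card U - t"
    using P_plus_M U_split by simp
qed

lemma rotation_inverse:
  fixes e f x w :: "'b::field"
  assumes "e ^ 2 + f ^ 2 \<noteq> 0"
  shows "e * ((e * x - f * w) / (e ^ 2 + f ^ 2)) + f * ((f * x + e * w) / (e ^ 2 + f ^ 2)) = x"
    and "- f * ((e * x - f * w) / (e ^ 2 + f ^ 2)) + e * ((f * x + e * w) / (e ^ 2 + f ^ 2)) = w"
    and "(e * (e * x + f * w) - f * (- f * x + e * w)) / (e ^ 2 + f ^ 2) = x"
    and "(f * (e * x + f * w) + e * (- f * x + e * w)) / (e ^ 2 + f ^ 2) = w"
proof -
  let ?t = "e ^ 2 + f ^ 2"
  have num: "e * (e * x - f * w) + f * (f * x + e * w) = ?t * x"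
      "- f * (e * x - f * w) + e * (f * x + e * w) = ?t * w"
      "e * (e * x + f * w) - f * (- f * x + e * w) = ?t * x"
      "f * (e * x + f * w) + e * (- f * x + e * w) = ?t * w"
    by (simp_all add: algebra_simps power2_eq_square)
  have "e * ((e * x - f * w) / ?t) + f * ((f * x + e * w) / ?t)
      = (e * (e * x - f * w) + f * (f * x + e * w)) / ?t"
    by (simp only: times_divide_eq_right add_divide_distrib[symmetric])
  thus "e * ((e * x - f * w) / ?t) + f * ((f * x + e * w) / ?t) = x"
    using assms by (simp only: num) simp
  have "- f * ((e * x - f * w) / ?t) + e * ((f * x + e * w) / ?t)
      = (- f * (e * x - f * w) + e * (f * x + e * w)) / ?t"
    by (simp only: times_divide_eq_right add_divide_distrib[symmetric])
  thus "- f * ((e * x - f * w) / ?t) + e * ((f * x + e * w) / ?t) = w"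
    using assms by (simp only: num) simp
  show "(e * (e * x + f * w) - f * (- f * x + e * w)) / ?t = x"
       "(f * (e * x + f * w) + e * (- f * x + e * w)) / ?t = w"
    using assms by (simp_all only: num) simp_all
qed


section \<open>Finite fields of prime power order\<close>

locale prime_power_field =
  fixes p m :: nat
  assumes prime_p: "prime p" and card_field: "CARD('a::{field,finite}) = p ^ m"
begin

lemma p_gt_1: "p > 1"
  using prime_p prime_gt_1_nat by blast

lemma CHAR_eq: "CHAR('a) = p"
proof -
  have "prime CHAR('a)"
    by (rule prime_CHAR_semidom) (rule finite_imp_CHAR_pos, simp)
  moreover have "CHAR('a) dvd p ^ m"
    using CHAR_dvd_CARD[where 'a = 'a] card_field by simp
  ultimately show ?thesis
    using prime_p prime_dvd_power primes_dvd_imp_eq by blast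
qed

lemma prime_CHAR: "prime CHAR('a)"
  using CHAR_eq prime_p by simp

lemma of_nat_eq_0_iff: "(of_nat n :: 'a) = 0 \<longleftrightarrow> p dvd n"
  by (simp add: of_nat_eq_0_iff_char_dvd CHAR_eq)

lemma of_nat_eq_iff_cong: "(of_nat a :: 'a) = of_nat b \<longleftrightarrow> [a = b] (mod p)"
  using of_nat_eq_iff_cong_CHAR[where 'a = 'a] CHAR_eq by simp

lemma of_nat_mod: "(of_nat (n mod p) :: 'a) = of_nat n"
  by (simp add: of_nat_eq_iff_cong cong_def)

lemma frobenius_add: "((x::'a) + y) ^ (p ^ j) = x ^ (p ^ j) + y ^ (p ^ j)"
  using freshmans_dream'[OF prime_CHAR, of "p ^ j" j x y] CHAR_eq by simp

lemma frobenius_sum: "(sum (f :: 'b \<Rightarrow> 'a) A) ^ (p ^ j) = (\<Sum>i\<in>A. f i ^ (p ^ j))"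
  using freshmans_dream_sum'[OF prime_CHAR, of "p ^ j" j f A] CHAR_eq by simp

lemma frobenius_minus: "(- (x::'a)) ^ (p ^ j) = - (x ^ (p ^ j))"
proof -
  have "x ^ (p ^ j) + (- x) ^ (p ^ j) = 0"
    using frobenius_add[of x "- x" j] p_gt_1 by (simp add: zero_power)
  thus ?thesis
    by (simp add: eq_neg_iff_add_eq_0 add.commute)
qed

lemma frobenius_diff: "((x::'a) - y) ^ (p ^ j) = x ^ (p ^ j) - y ^ (p ^ j)"
  using frobenius_add[of x "- y" j] frobenius_minus[of y j] by simp

lemma power_p_power_m: "(x::'a) ^ (p ^ m) = x"
  using finite_field_power_card_eq[of x] card_field by simp

lemma power_p_power_mult_m: "(x::'a) ^ (p ^ (m * j)) = x"
proof (induction j)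
  case (Suc j)
  have "p ^ (m * Suc j) = p ^ (m * j) * p ^ m"
    by (simp add: power_add)
  hence "(x::'a) ^ (p ^ (m * Suc j)) = (x ^ (p ^ (m * j))) ^ (p ^ m)"
    by (simp only: power_mult)
  thus ?case
    using Suc power_p_power_m by simp
qed simp

definition prime_field :: "'a set" where
  "prime_field = {c. c ^ p = c}"

lemma of_nat_in_prime_field: "(of_nat j :: 'a) \<in> prime_field"
proof (induction j)
  case 0
  then show ?case
    using p_gt_1 by (simp add: prime_field_def)
next
  case (Suc j)
  have "(of_nat (Suc j) :: 'a) ^ p = (of_nat j + 1) ^ (p ^ 1)"
    by (simp add: add.commute)
  also have "\<dots> = of_nat (Suc j)"
    using Suc by (subst frobenius_add) (simp add: prime_field_def)
  finally show ?case
    by (simp add: prime_field_def)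
qed

lemma inj_on_of_nat: "inj_on (of_nat :: nat \<Rightarrow> 'a) {..<p}"
  by (auto simp: inj_on_def of_nat_eq_iff_cong cong_def)

lemma card_prime_field_le: "card prime_field \<le> p"
proof -
  define P :: "'a poly" where "P = Polynomial.monom 1 p - [:0, 1:]"
  have "Polynomial.coeff [:0, 1::'a:] p = 0"
    using p_gt_1 by (cases p) (auto simp: coeff_pCons split: nat.split)
  hence "Polynomial.coeff P p = 1"
    by (simp add: P_def)
  hence "P \<noteq> 0"
    by auto
  moreover have "degree P \<le> p"
    unfolding P_def by (rule degree_diff_le) (use p_gt_1 in \<open>auto simp: degree_monom_eq\<close>)
  moreover have "prime_field = {x. poly P x = 0}"
    by (auto simp: prime_field_def P_def poly_monom)
  ultimately show ?thesis
    using card_poly_roots_bound[of P] by simp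
qed

lemma prime_field_eq: "prime_field = of_nat ` {..<p}"
proof -
  have sub: "of_nat ` {..<p} \<subseteq> prime_field"
    using of_nat_in_prime_field by auto
  have "card (of_nat ` {..<p} :: 'a set) = p"
    using card_image[OF inj_on_of_nat] by simp
  thus ?thesis
    using card_subset_eq[OF _ sub] card_prime_field_le card_mono[OF _ sub] by (simp add: le_antisym)
qed

lemma card_prime_field: "card prime_field = p"
  using card_image[OF inj_on_of_nat] prime_field_eq by simp

lemma power_p_power_prime_field: "c \<in> prime_field \<Longrightarrow> c ^ (p ^ j) = c"
proof (induction j)
  case (Suc j)
  have "c ^ (p ^ Suc j) = (c ^ (p ^ j)) ^ p"
    by (simp add: power_mult[symmetric] mult.commute)
  thus ?case
    using Suc by (simp add: prime_field_def)
qed simp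

lemma prime_field_mult: "a \<in> prime_field \<Longrightarrow> b \<in> prime_field \<Longrightarrow> a * b \<in> prime_field"
  by (simp add: prime_field_def power_mult_distrib)

lemma prime_field_uminus: "a \<in> prime_field \<Longrightarrow> - a \<in> prime_field"
  using frobenius_minus[of a 1] by (simp add: prime_field_def)

lemma prime_field_diff: "a \<in> prime_field \<Longrightarrow> b \<in> prime_field \<Longrightarrow> a - b \<in> prime_field"
  using frobenius_diff[of a b 1] by (simp add: prime_field_def)

lemma prime_field_divide: "a \<in> prime_field \<Longrightarrow> b \<in> prime_field \<Longrightarrow> a / b \<in> prime_field"
  by (simp add: prime_field_def power_divide)

lemma prime_field_0: "0 \<in> prime_field" and prime_field_1: "1 \<in> prime_field"
  using p_gt_1 by (auto simp: prime_field_def)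

lemma prime_field_power2: "a \<in> prime_field \<Longrightarrow> a ^ 2 \<in> prime_field"
  by (simp add: prime_field_def flip: power_mult) (simp add: power_mult mult.commute)

lemma ftrace_power_p: "ftrace p m ((x::'a) ^ p) = ftrace p m x"
proof -
  have "ftrace p m (x ^ p) = (\<Sum>i<m. x ^ (p ^ Suc i))"
    by (simp add: ftrace_def power_mult[symmetric] mult.commute)
  moreover have "(\<Sum>i<Suc m. x ^ (p ^ i)) = x ^ (p ^ 0) + (\<Sum>i<m. x ^ (p ^ Suc i))"
    by (rule sum.lessThan_Suc_shift)
  ultimately show ?thesis
    using power_p_power_m[of x] by (simp add: ftrace_def)
qed

lemma ftrace_power_p_power: "ftrace p m ((x::'a) ^ (p ^ j)) = ftrace p m x"
proof (induction j)
  case (Suc j)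
  have "x ^ (p ^ Suc j) = (x ^ (p ^ j)) ^ p"
    by (simp add: power_mult[symmetric] mult.commute)
  thus ?case
    using Suc ftrace_power_p by simp
qed simp

lemma ftrace_in_prime_field: "ftrace p m (x::'a) \<in> prime_field"
proof -
  have "(ftrace p m x) ^ p = ftrace p m (x ^ p)"
    using frobenius_sum[of "\<lambda>i. x ^ (p ^ i)" "{..<m}" 1]
    by (simp add: ftrace_def power_mult[symmetric] mult.commute)
  thus ?thesis
    using ftrace_power_p by (simp add: prime_field_def)
qed

lemma ftrace_add: "ftrace p m ((x::'a) + y) = ftrace p m x + ftrace p m y"
  by (simp add: ftrace_def frobenius_add sum.distrib)

lemma ftrace_mult_prime_field: "c \<in> prime_field \<Longrightarrow> ftrace p m (c * (x::'a)) = c * ftrace p m x"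
  by (simp add: ftrace_def power_mult_distrib power_p_power_prime_field sum_distrib_left)

lemma ftrace_0: "ftrace p m (0::'a) = 0"
  using p_gt_1 by (simp add: ftrace_def power_0_left)

(* Otherwise the trace polynomial, of degree p^(m-1) < p^m, would vanish on all of F_(p^m). *)
lemma ftrace_nonzero: "\<exists>x::'a. ftrace p m x \<noteq> 0"
proof (rule ccontr)
  assume "\<not> ?thesis"
  hence trace_zero: "ftrace p m x = 0" for x :: 'a
    by blast
  define T :: "'a poly" where "T = (\<Sum>i<m. Polynomial.monom 1 (p ^ i))"
  have "card {0, 1 :: 'a} \<le> CARD('a)"
    by (rule card_mono) simp_all
  hence "m \<ge> 1"
    using card_field by (cases m) auto
  have "inj (\<lambda>i. p ^ i)"
    using p_gt_1 by (auto simp: inj_on_def)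
  hence "Polynomial.coeff T (p ^ (m - 1)) = (\<Sum>i<m. if i = m - 1 then 1 else 0)"
    by (auto simp: T_def coeff_sum inj_eq intro!: sum.cong)
  also have "\<dots> = 1"
    using \<open>m \<ge> 1\<close> by simp
  finally have "T \<noteq> 0"
    by auto
  have "degree T \<le> p ^ (m - 1)"
    unfolding T_def
  proof (rule degree_sum_le)
    fix i assume "i \<in> {..<m}"
    hence "p ^ i \<le> p ^ (m - 1)"
      using p_gt_1 by (intro power_increasing) auto
    thus "degree (Polynomial.monom (1::'a) (p ^ i)) \<le> p ^ (m - 1)"
      by (simp add: degree_monom_eq)
  qed simp
  moreover have "{x. poly T x = 0} = UNIV"
    using trace_zero by (auto simp: T_def poly_sum poly_monom ftrace_def)
  ultimately have "p ^ m \<le> p ^ (m - 1)"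
    using card_poly_roots_bound[OF \<open>T \<noteq> 0\<close>] card_field by simp
  moreover have "p ^ (m - 1) < p ^ m"
    using p_gt_1 \<open>m \<ge> 1\<close> by (intro power_strict_increasing) auto
  ultimately show False
    by simp
qed

lemma trace_nat: "trace_nat p m (x::'a) < p \<and> of_nat (trace_nat p m x) = ftrace p m x"
proof -
  obtain t where t: "t < p" "of_nat t = ftrace p m x"
    using ftrace_in_prime_field[of x] prime_field_eq by auto
  have "\<exists>!t. t < p \<and> (of_nat t :: 'a) = ftrace p m x"
    using t inj_on_of_nat by (intro ex1I[of _ t]) (auto simp: inj_on_def)
  thus ?thesis
    unfolding trace_nat_def by (rule theI')
qed

lemma trace_nat_less: "trace_nat p m (x::'a) < p"
  using trace_nat by blast

lemma of_nat_trace_nat: "of_nat (trace_nat p m (x::'a)) = ftrace p m x"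
  using trace_nat by blast

lemma trace_nat_eqI: "t < p \<Longrightarrow> of_nat t = ftrace p m (x::'a) \<Longrightarrow> trace_nat p m x = t"
  using trace_nat[of x] inj_on_of_nat by (auto simp: inj_on_def)

lemma trace_nat_add: "trace_nat p m ((x::'a) + y) = (trace_nat p m x + trace_nat p m y) mod p"
  by (rule trace_nat_eqI) (use p_gt_1 in \<open>simp_all add: of_nat_mod of_nat_trace_nat ftrace_add\<close>)

lemma trace_nat_of_nat_mult: "trace_nat p m (of_nat y * (x::'a)) = (y * trace_nat p m x) mod p"
  by (rule trace_nat_eqI)
     (use p_gt_1 in \<open>simp_all add: of_nat_mod of_nat_trace_nat ftrace_mult_prime_field of_nat_in_prime_field\<close>)

lemma trace_nat_cong: "ftrace p m (x::'a) = ftrace p m y \<Longrightarrow> trace_nat p m x = trace_nat p m y"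
  by (metis of_nat_trace_nat trace_nat_less trace_nat_eqI)

lemma trace_nat_eq_0_iff: "trace_nat p m (x::'a) = 0 \<longleftrightarrow> ftrace p m x = 0"
  by (metis of_nat_0 of_nat_trace_nat trace_nat_eqI p_gt_1 less_trans zero_less_one)

lemma zeta_power_eq_1_iff: "zeta p ^ n = 1 \<longleftrightarrow> p dvd n"
proof -
  have "real p > 0"
    using p_gt_1 by simp
  have "zeta p ^ n = exp (of_nat n * (2 * of_real pi * \<i> / of_nat p))"
    by (simp only: zeta_def exp_of_nat_mult)
  hence "zeta p ^ n = 1 \<longleftrightarrow> (\<exists>j::int. 2 * pi * real n / real p = of_int (2 * j) * pi)"
    by (simp add: exp_eq_1 mult_ac)
  also have "\<dots> \<longleftrightarrow> (\<exists>j::int. int n = int p * j)"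
  proof
    assume "\<exists>j::int. 2 * pi * real n / real p = of_int (2 * j) * pi"
    then obtain j :: int where "2 * pi * real n / real p = of_int (2 * j) * pi"
      by blast
    hence "real n = real p * of_int j"
      using \<open>real p > 0\<close> pi_gt_zero by (simp add: field_simps)
    hence "of_int (int n) = (of_int (int p * j) :: real)"
      by simp
    thus "\<exists>j::int. int n = int p * j"
      using of_int_eq_iff by blast
  next
    assume "\<exists>j::int. int n = int p * j"
    then obtain j where "int n = int p * j"
      by blast
    hence "real n = real p * of_int j"
      by (metis of_int_mult of_int_of_nat_eq)
    thus "\<exists>j::int. 2 * pi * real n / real p = of_int (2 * j) * pi"
      using \<open>real p > 0\<close> by (intro exI[of _ j]) (simp add: field_simps)
  qed
  also have "\<dots> \<longleftrightarrow> p dvd n"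
    by (metis dvd_def int_dvd_int_iff)
  finally show ?thesis .
qed

lemma zeta_power_mod: "zeta p ^ (n mod p) = zeta p ^ n"
proof -
  have "zeta p ^ n = zeta p ^ (p * (n div p) + n mod p)"
    by simp
  also have "\<dots> = zeta p ^ (n mod p)"
    using zeta_power_eq_1_iff[of p] by (simp only: power_add power_mult) simp
  finally show ?thesis
    by simp
qed

definition psi :: "'a \<Rightarrow> complex" where
  "psi a = zeta p ^ trace_nat p m a"

lemma psi_add: "psi (a + b) = psi a * psi b"
  by (simp add: psi_def trace_nat_add zeta_power_mod power_add)

lemma psi_0: "psi 0 = 1"
  using trace_nat_eq_0_iff[of 0] by (simp add: psi_def ftrace_0)

lemma psi_cong: "ftrace p m a = ftrace p m b \<Longrightarrow> psi a = psi b"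
  unfolding psi_def by (drule trace_nat_cong) simp

lemma zeta_power_mult_trace_nat: "zeta p ^ (y * trace_nat p m a) = psi (of_nat y * a)"
  by (simp add: psi_def trace_nat_of_nat_mult zeta_power_mod)

lemma psi_eq_1_iff: "psi a = 1 \<longleftrightarrow> ftrace p m a = 0"
  using dvd_iff_eq_0_if_less[OF trace_nat_less[of a]]
  by (simp add: psi_def zeta_power_eq_1_iff trace_nat_eq_0_iff)

lemma sum_psi: "(\<Sum>x\<in>UNIV. psi x) = 0"
proof -
  obtain x0 :: 'a where "ftrace p m x0 \<noteq> 0"
    using ftrace_nonzero by blast
  hence "psi x0 \<noteq> 1"
    by (simp add: psi_eq_1_iff)
  have "(\<Sum>x\<in>UNIV. psi x) = (\<Sum>x\<in>UNIV. psi (x + x0))"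
    by (rule sum.reindex_bij_witness[of _ "\<lambda>y. y + x0" "\<lambda>y. y - x0"]) auto
  also have "\<dots> = psi x0 * (\<Sum>x\<in>UNIV. psi x)"
    by (simp add: psi_add sum_distrib_left mult.commute)
  finally have "(1 - psi x0) * (\<Sum>x\<in>UNIV. psi x) = 0"
    by (simp add: algebra_simps)
  thus ?thesis
    using \<open>psi x0 \<noteq> 1\<close> by simp
qed

lemma sum_psi_mult: "(\<Sum>x\<in>UNIV. psi (c * x)) = (if c = 0 then of_nat (p ^ m) else 0)"
proof (cases "c = 0")
  case True
  thus ?thesis
    by (simp add: psi_0 card_field)
next
  case False
  have "(\<Sum>x\<in>UNIV. psi (c * x)) = (\<Sum>x\<in>UNIV. psi x)"
    by (rule sum.reindex_bij_witness[of _ "\<lambda>y. y / c" "\<lambda>y. c * y"]) (use False in auto)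
  thus ?thesis
    using sum_psi False by simp
qed

lemma sum_zeta_power:
  "(\<Sum>y\<in>{1..<p}. zeta p ^ (y * t)) = (if p dvd t then of_nat p - 1 else - 1)"
proof -
  have "{..<p} = insert 0 {1..<p}"
    using p_gt_1 by auto
  hence sum_eq: "(\<Sum>y\<in>{1..<p}. zeta p ^ (y * t)) = (\<Sum>y<p. (zeta p ^ t) ^ y) - 1"
    by (simp add: power_mult[symmetric] mult.commute)
  show ?thesis
  proof (cases "p dvd t")
    case True
    thus ?thesis
      using sum_eq zeta_power_eq_1_iff[of t] by simp
  next
    case False
    have "(zeta p ^ t) ^ p = 1"
      using zeta_power_eq_1_iff[of "t * p"] by (simp add: power_mult)
    hence "(\<Sum>y<p. (zeta p ^ t) ^ y) = 0"
      using False zeta_power_eq_1_iff[of t] by (simp add: sum_gp_strict)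
    thus ?thesis
      using sum_eq False by simp
  qed
qed

lemma Dsum_in_Ints: "Dsum p m k u (v::'a) \<in> \<int>"
proof -
  have "Dsum p m k u v
      = (\<Sum>x\<in>UNIV. \<Sum>y\<in>{1..<p}. zeta p ^ (y * trace_nat p m (u * x ^ 2 + v * x ^ (p ^ k + 1))))"
    unfolding Dsum_def by (rule sum.swap)
  also have "\<dots> = (\<Sum>x\<in>UNIV. of_int (if trace_nat p m (u * x ^ 2 + v * x ^ (p ^ k + 1)) = 0
                                        then int p - 1 else - 1))"
  proof (intro sum.cong refl)
    fix x
    let ?t = "trace_nat p m (u * x ^ 2 + v * x ^ (p ^ k + 1))"
    show "(\<Sum>y\<in>{1..<p}. zeta p ^ (y * ?t)) = of_int (if ?t = 0 then int p - 1 else - 1)"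
      using dvd_iff_eq_0_if_less[OF trace_nat_less] by (subst sum_zeta_power) simp
  qed
  finally show ?thesis
    by (simp only: of_int_sum[symmetric] Ints_of_int)
qed

end

section \<open>Squares in the prime field\<close>

locale odd_prime_power_field = prime_power_field +
  assumes odd_p: "odd p"
begin

lemma two_nonzero: "(2::'a) \<noteq> 0"
proof -
  have "p \<ge> 3"
    using p_gt_1 odd_p by presburger
  hence "\<not> p dvd 2"
    by (auto dest: dvd_imp_le)
  thus ?thesis
    using of_nat_eq_0_iff[of 2] by simp
qed

lemma neq_uminus: "c \<noteq> 0 \<Longrightarrow> c \<noteq> - (c::'a)"
  using two_nonzero by (auto simp: eq_neg_iff_add_eq_0 simp flip: mult_2)

definition prime_field_units :: "'a set" where
  "prime_field_units = prime_field - {0}"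

definition prime_field_squares :: "'a set" where
  "prime_field_squares = (\<lambda>c. c ^ 2) ` prime_field_units"

lemma card_prime_field_units: "card prime_field_units = p - 1"
  using card_prime_field prime_field_0 by (simp add: prime_field_units_def)

lemma prime_field_units_mult: "a \<in> prime_field_units \<Longrightarrow> b \<in> prime_field_units \<Longrightarrow> a * b \<in> prime_field_units"
  by (simp add: prime_field_units_def prime_field_mult)

lemma prime_field_units_divide: "a \<in> prime_field_units \<Longrightarrow> b \<in> prime_field_units \<Longrightarrow> a / b \<in> prime_field_units"
  by (simp add: prime_field_units_def prime_field_divide)

lemma prime_field_units_uminus: "a \<in> prime_field_units \<Longrightarrow> - a \<in> prime_field_units"
  by (simp add: prime_field_units_def prime_field_uminus)

lemma prime_field_squares_subset: "prime_field_squares \<subseteq> prime_field_units"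
  by (auto simp: prime_field_squares_def power2_eq_square prime_field_units_mult)

lemma prime_field_units_eq: "prime_field_units = of_nat ` {1..<p}"
proof
  show "of_nat ` {1..<p} \<subseteq> prime_field_units"
    using of_nat_in_prime_field
    by (auto simp: prime_field_units_def of_nat_eq_0_iff dvd_iff_eq_0_if_less)
  show "prime_field_units \<subseteq> of_nat ` {1..<p}"
  proof
    fix y assume "y \<in> prime_field_units"
    then obtain j where "j < p" "y = of_nat j" "y \<noteq> 0"
      using prime_field_eq by (auto simp: prime_field_units_def)
    moreover have "j \<noteq> 0"
      using \<open>y = of_nat j\<close> \<open>y \<noteq> 0\<close> by (metis of_nat_0)
    ultimately show "y \<in> of_nat ` {1..<p}"
      by (intro image_eqI[of _ _ j]) auto
  qed
qed

(* Each square c^2 of a unit has exactly the two square roots c and -c. *)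
lemma card_prime_field_squares: "2 * card prime_field_squares = p - 1"
proof -
  define roots where "roots s = {c \<in> prime_field_units. c ^ 2 = s}" for s
  have units_eq: "prime_field_units = \<Union>(roots ` prime_field_squares)"
    by (auto simp: roots_def prime_field_squares_def)
  have "card prime_field_units = (\<Sum>s\<in>prime_field_squares. card (roots s))"
    unfolding units_eq by (rule card_UN_disjoint) (auto simp: roots_def)
  also have "\<dots> = (\<Sum>s\<in>prime_field_squares. 2)"
  proof (rule sum.cong[OF refl])
    fix s assume "s \<in> prime_field_squares"
    then obtain c where c: "c \<in> prime_field_units" "s = c ^ 2"
      by (auto simp: prime_field_squares_def)
    have "roots s = {c, - c}"
      using c prime_field_units_uminus by (auto simp: roots_def power2_eq_iff)
    moreover have "c \<noteq> - c"
      using c by (intro neq_uminus) (simp add: prime_field_units_def)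
    ultimately show "card (roots s) = 2"
      by simp
  qed
  finally show ?thesis
    using card_prime_field_units by simp
qed

lemma exists_nonsquare: "\<exists>n. n \<in> prime_field_units - prime_field_squares"
proof (rule ccontr)
  assume "\<not> ?thesis"
  hence "card prime_field_units \<le> card prime_field_squares"
    by (intro card_mono) auto
  thus False
    using card_prime_field_squares card_prime_field_units p_gt_1 by simp
qed

(* The image consists of non-squares; equality then follows by counting. *)
lemma nonsquare_mult_squares:
  assumes n: "n \<in> prime_field_units - prime_field_squares"
  shows "(\<lambda>s. n * s) ` prime_field_squares = prime_field_units - prime_field_squares"
proof -
  have "inj_on (\<lambda>s. n * s) prime_field_squares"
    using n by (auto simp: inj_on_def prime_field_units_def)
  hence "card ((\<lambda>s. n * s) ` prime_field_squares) = card (prime_field_units - prime_field_squares)"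
    using card_prime_field_squares card_prime_field_units prime_field_squares_subset
    by (simp add: card_image card_Diff_subset)
  moreover have "(\<lambda>s. n * s) ` prime_field_squares \<subseteq> prime_field_units - prime_field_squares"
  proof
    fix t assume "t \<in> (\<lambda>s. n * s) ` prime_field_squares"
    then obtain c where c: "c \<in> prime_field_units" "t = n * c ^ 2"
      by (auto simp: prime_field_squares_def)
    show "t \<in> prime_field_units - prime_field_squares"
      unfolding \<open>t = n * c ^ 2\<close>
    proof
      show "n * c ^ 2 \<in> prime_field_units"
        using c n prime_field_units_mult by (simp add: power2_eq_square)
      show "n * c ^ 2 \<notin> prime_field_squares"
      proof
        assume "n * c ^ 2 \<in> prime_field_squares"
        then obtain d where d: "d \<in> prime_field_units" "n * c ^ 2 = d ^ 2"
          by (auto simp: prime_field_squares_def)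
        hence "n = (d / c) ^ 2"
          using c by (simp add: prime_field_units_def field_simps power2_eq_square)
        moreover have "d / c \<in> prime_field_units"
          using c d prime_field_units_divide by simp
        ultimately show False
          using n by (auto simp: prime_field_squares_def)
      qed
    qed
  qed
  ultimately show ?thesis
    by (intro card_subset_eq) simp_all
qed

(* The sets {e^2} and {n - f^2} each have (p + 1)/2 elements of F_p, so they meet. *)
lemma prime_field_sum_two_squares:
  assumes "n \<in> prime_field"
  shows "\<exists>e\<in>prime_field. \<exists>f\<in>prime_field. n = e ^ 2 + f ^ 2"
proof -
  define A where "A = (\<lambda>a. a ^ 2) ` prime_field"
  define B where "B = (\<lambda>s. n - s) ` A"
  have "prime_field = insert 0 prime_field_units"
    using prime_field_0 by (auto simp: prime_field_units_def)
  hence "A = insert 0 prime_field_squares"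
    by (simp add: A_def prime_field_squares_def)
  moreover have "0 \<notin> prime_field_squares"
    using prime_field_squares_subset by (auto simp: prime_field_units_def)
  ultimately have card_A: "card A = card prime_field_squares + 1"
    by simp
  have "inj_on (\<lambda>s. n - s) A"
    by (auto simp: inj_on_def)
  hence card_B: "card B = card A"
    by (simp add: B_def card_image)
  have "A \<subseteq> prime_field" "B \<subseteq> prime_field"
    using assms by (auto simp: A_def B_def prime_field_power2 prime_field_diff)
  hence "card (A \<union> B) \<le> p"
    using card_mono[of prime_field "A \<union> B"] card_prime_field by simp
  moreover have "card (A \<union> B) + card (A \<inter> B) = card A + card B"
    using card_Un_Int[of A B] by simp
  ultimately have "A \<inter> B \<noteq> {}"
    using card_A card_B card_prime_field_squares by auto
  then obtain e f where "e \<in> prime_field" "f \<in> prime_field" "e ^ 2 = n - f ^ 2"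
    by (auto simp: A_def B_def)
  thus ?thesis
    by (metis diff_add_cancel)
qed

(* As m is odd, F_(p^m) contains no quadratic extension of F_p: if c^(p-1) = -1, then
   c^(p^m) = (-1)^m c = -c. *)
lemma prime_field_square_root:
  assumes "odd m" and "c ^ 2 \<in> prime_field"
  shows "c \<in> prime_field"
proof (cases "c = 0")
  case True
  thus ?thesis
    using prime_field_0 by simp
next
  case False
  have c_p: "c ^ p = c ^ (p - 1) * c"
    using p_gt_1 by (simp flip: power_Suc2)
  have "(c ^ p) ^ 2 = (c ^ 2) ^ p"
    by (simp only: power_mult[symmetric] mult.commute)
  also have "\<dots> = c ^ 2"
    using assms(2) by (simp add: prime_field_def)
  finally have "(c ^ (p - 1)) ^ 2 * c ^ 2 = 1 * c ^ 2"
    by (simp add: c_p power_mult_distrib)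
  hence "(c ^ (p - 1)) ^ 2 = 1"
    using False by (metis mult_cancel_right power_not_zero)
  hence "c ^ (p - 1) = 1 \<or> c ^ (p - 1) = - 1"
    by (simp add: power2_eq_1_iff)
  thus ?thesis
  proof
    assume "c ^ (p - 1) = 1"
    thus ?thesis
      using c_p by (simp add: prime_field_def)
  next
    assume "c ^ (p - 1) = - 1"
    hence c_p': "c ^ p = - c"
      using c_p by simp
    have iterate: "c ^ (p ^ j) = (- 1) ^ j * c" for j
    proof (induction j)
      case (Suc j)
      have "c ^ (p ^ Suc j) = (c ^ (p ^ j)) ^ p"
        by (simp add: power_mult[symmetric] mult.commute)
      also have "\<dots> = ((- 1) ^ j) ^ p * c ^ p"
        using Suc by (simp add: power_mult_distrib)
      also have "((- 1 :: 'a) ^ j) ^ p = (- 1) ^ j"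
        using odd_p by (simp only: power_mult[symmetric] mult.commute[of j]) (simp add: power_mult)
      finally show ?case
        using c_p' by simp
    qed simp
    have "c = - c"
      using iterate[of m] power_p_power_m[of c] assms(1) by simp
    thus ?thesis
      using neq_uminus False by blast
  qed
qed

end

section \<open>The quadratic form a x^2 + b x^(p^k + 1)\<close>

locale quadratic_trace_form = odd_prime_power_field +
  fixes k :: nat
  assumes odd_m: "odd m" and k_pos: "k > 0" and coprime_m_k: "coprime m k"
begin

definition sigma :: "'a \<Rightarrow> 'a" where
  "sigma z = z ^ (p ^ k)"

definition sigma_inv :: "'a \<Rightarrow> 'a" where
  "sigma_inv z = z ^ (p ^ (m * k - k))"

lemma sigma_add: "sigma (x + y) = sigma x + sigma y"
  by (simp add: sigma_def frobenius_add)

lemma sigma_mult: "sigma (x * y) = sigma x * sigma y"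
  by (simp add: sigma_def power_mult_distrib)

lemma sigma_uminus: "sigma (- x) = - sigma x"
  by (simp add: sigma_def frobenius_minus)

lemma sigma_diff: "sigma (x - y) = sigma x - sigma y"
  by (simp add: sigma_def frobenius_diff)

lemma sigma_divide: "sigma (x / y) = sigma x / sigma y"
  by (simp add: sigma_def power_divide)

lemma sigma_eq_0_iff: "sigma z = 0 \<longleftrightarrow> z = 0"
  using p_gt_1 by (simp add: sigma_def)

lemma sigma_0: "sigma 0 = 0"
  by (simp add: sigma_eq_0_iff)

lemma sigma_prime_field: "c \<in> prime_field \<Longrightarrow> sigma c = c"
  by (simp add: sigma_def power_p_power_prime_field)

lemma sigma_inv_add: "sigma_inv (x + y) = sigma_inv x + sigma_inv y"
  by (simp add: sigma_inv_def frobenius_add)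

lemma sigma_inv_mult: "sigma_inv (x * y) = sigma_inv x * sigma_inv y"
  by (simp add: sigma_inv_def power_mult_distrib)

lemma sigma_inv_prime_field: "c \<in> prime_field \<Longrightarrow> sigma_inv c = c"
  by (simp add: sigma_inv_def power_p_power_prime_field)

lemma sigma_inv_0: "sigma_inv 0 = 0"
  using p_gt_1 by (simp add: sigma_inv_def)

lemma power_p_power_k_inverse: "p ^ k * p ^ (m * k - k) = p ^ (m * k)"
proof -
  have "k \<le> m * k"
    using odd_m by (cases m) auto
  thus ?thesis
    by (simp flip: power_add)
qed

lemma sigma_inv_sigma: "sigma_inv (sigma z) = z"
proof -
  have "sigma_inv (sigma z) = z ^ (p ^ k * p ^ (m * k - k))"
    by (simp add: sigma_inv_def sigma_def power_mult)
  thus ?thesis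
    using power_p_power_k_inverse power_p_power_mult_m by simp
qed

lemma sigma_sigma_inv: "sigma (sigma_inv z) = z"
proof -
  have "sigma (sigma_inv z) = z ^ (p ^ (m * k - k) * p ^ k)"
    by (simp add: sigma_inv_def sigma_def power_mult)
  thus ?thesis
    using power_p_power_k_inverse power_p_power_mult_m by (simp add: mult.commute)
qed

lemma ftrace_sigma_inv: "ftrace p m (sigma_inv z) = ftrace p m z"
  by (simp add: sigma_inv_def ftrace_power_p_power)

lemma ftrace_mult_sigma: "ftrace p m (a * sigma b) = ftrace p m (sigma_inv a * b)"
proof -
  have "ftrace p m (a * sigma b) = ftrace p m (sigma_inv (a * sigma b))"
    by (simp add: ftrace_sigma_inv)
  also have "sigma_inv (a * sigma b) = sigma_inv a * b"
    by (simp add: sigma_inv_mult sigma_inv_sigma)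
  finally show ?thesis .
qed

(* Since gcd(k, m) = 1, some iterate sigma^x acts on F_(p^m) as c |-> c^p (Bezout). *)
lemma sigma_fixed_imp_prime_field:
  assumes "sigma c = c"
  shows "c \<in> prime_field"
proof -
  have iterate: "c ^ (p ^ (k * x)) = c" for x
  proof (induction x)
    case (Suc x)
    have "p ^ (k * Suc x) = p ^ (k * x) * p ^ k"
      by (simp add: power_add)
    hence "c ^ (p ^ (k * Suc x)) = (c ^ (p ^ (k * x))) ^ (p ^ k)"
      by (simp only: power_mult)
    thus ?case
      using Suc assms by (simp add: sigma_def)
  qed simp
  obtain x y where "k * x = m * y + gcd k m"
    using bezout_nat k_pos by blast
  moreover have "gcd k m = 1"
    using coprime_m_k by (simp add: coprime_iff_gcd_eq_1 gcd.commute)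
  ultimately have "p ^ (k * x) = p ^ (m * y) * p"
    by simp
  hence "c = (c ^ (p ^ (m * y))) ^ p"
    using iterate[of x] by (simp add: power_mult)
  thus ?thesis
    using power_p_power_mult_m by (simp add: prime_field_def)
qed

definition qform :: "'a \<Rightarrow> 'a \<Rightarrow> 'a \<Rightarrow> 'a" where
  "qform a b x = a * x ^ 2 + b * x ^ (p ^ k + 1)"

definition weil_sum :: "'a \<Rightarrow> 'a \<Rightarrow> complex" where
  "weil_sum a b = (\<Sum>x\<in>UNIV. psi (qform a b x))"

(* Tr(w * polar a b z) is the symmetric bilinear form of the quadratic form Tr(qform a b). *)
definition polar :: "'a \<Rightarrow> 'a \<Rightarrow> 'a \<Rightarrow> 'a" where
  "polar a b z = 2 * a * z + b * sigma z + sigma_inv (b * z)"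

definition radical :: "'a \<Rightarrow> 'a \<Rightarrow> 'a set" where
  "radical a b = {z. polar a b z = 0}"

lemma qform_sigma: "qform a b x = a * x ^ 2 + b * (sigma x * x)"
  by (simp add: qform_def sigma_def)

lemma qform_uminus: "qform (- a) (- b) x = - qform a b x"
  by (simp add: qform_def)

lemma qform_add:
  "qform a b (w + z) = qform a b w + qform a b z + (2 * a * w * z + b * (sigma w * z) + b * (sigma z * w))"
  by (simp add: qform_sigma sigma_add algebra_simps power2_eq_square)

lemma ftrace_cross_term:
  "ftrace p m (2 * a * w * z + b * (sigma w * z) + b * (sigma z * w)) = ftrace p m (w * polar a b z)"
proof -
  have "ftrace p m (b * (sigma w * z)) = ftrace p m (sigma_inv (b * z) * w)"
    using ftrace_mult_sigma[of "b * z" w] by (simp add: mult_ac)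
  moreover have "w * polar a b z = 2 * a * w * z + b * (sigma z * w) + sigma_inv (b * z) * w"
    by (simp add: polar_def algebra_simps)
  ultimately show ?thesis
    by (simp add: ftrace_add)
qed

lemma ftrace_qform_radical:
  assumes "z \<in> radical a b"
  shows "ftrace p m (qform a b z) = 0"
proof -
  have two: "(2::'a) \<in> prime_field"
    using of_nat_in_prime_field[of 2] by simp
  have swap: "ftrace p m (z * sigma_inv (b * z)) = ftrace p m (b * (sigma z * z))"
    using ftrace_mult_sigma[of "b * z" z] by (simp add: mult_ac)
  have "z * polar a b z = 2 * (a * z ^ 2) + b * (sigma z * z) + z * sigma_inv (b * z)"
    by (simp add: polar_def algebra_simps power2_eq_square)
  hence "ftrace p m (z * polar a b z)
      = 2 * ftrace p m (a * z ^ 2) + ftrace p m (b * (sigma z * z)) + ftrace p m (b * (sigma z * z))"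
    by (simp only: ftrace_add ftrace_mult_prime_field[OF two] swap)
  also have "\<dots> = 2 * ftrace p m (qform a b z)"
    by (simp add: qform_sigma ftrace_add algebra_simps)
  finally have "2 * ftrace p m (qform a b z) = 0"
    using assms ftrace_0 by (simp add: radical_def)
  thus ?thesis
    using two_nonzero by simp
qed

lemma weil_sum_norm: "weil_sum a b * weil_sum (- a) (- b) = of_nat (p ^ m) * of_nat (card (radical a b))"
proof -
  have "weil_sum a b * weil_sum (- a) (- b) = (\<Sum>w\<in>UNIV. \<Sum>x\<in>UNIV. psi (qform a b x - qform a b w))"
    by (subst sum.swap) (simp add: weil_sum_def qform_uminus sum_product psi_add[symmetric])
  also have "\<dots> = (\<Sum>w\<in>UNIV. \<Sum>z\<in>UNIV. psi (qform a b (w + z) - qform a b w))"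
  proof (rule sum.cong[OF refl])
    fix w
    show "(\<Sum>x\<in>UNIV. psi (qform a b x - qform a b w)) = (\<Sum>z\<in>UNIV. psi (qform a b (w + z) - qform a b w))"
      by (rule sum.reindex_bij_witness[of _ "\<lambda>z. w + z" "\<lambda>x. x - w"]) auto
  qed
  also have "\<dots> = (\<Sum>w\<in>UNIV. \<Sum>z\<in>UNIV. psi (qform a b z) * psi (polar a b z * w))"
  proof (intro sum.cong refl)
    fix w z
    have "psi (qform a b (w + z) - qform a b w)
        = psi (qform a b z) * psi (2 * a * w * z + b * (sigma w * z) + b * (sigma z * w))"
      by (simp add: qform_add psi_add)
    also have "\<dots> = psi (qform a b z) * psi (w * polar a b z)"
      by (subst psi_cong[OF ftrace_cross_term]) (rule refl)
    also have "w * polar a b z = polar a b z * w"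
      by (rule mult.commute)
    finally show "psi (qform a b (w + z) - qform a b w) = psi (qform a b z) * psi (polar a b z * w)" .
  qed
  also have "\<dots> = (\<Sum>z\<in>UNIV. psi (qform a b z) * (\<Sum>w\<in>UNIV. psi (polar a b z * w)))"
    by (subst sum.swap) (simp add: sum_distrib_left)
  also have "\<dots> = (\<Sum>z\<in>UNIV. if z \<in> radical a b then of_nat (p ^ m) else 0)"
    using ftrace_qform_radical psi_eq_1_iff by (intro sum.cong refl) (simp add: sum_psi_mult radical_def)
  also have "\<dots> = (\<Sum>z\<in>radical a b. of_nat (p ^ m))"
    by (simp add: sum.inter_restrict[symmetric])
  finally show ?thesis
    by simp
qed


subsection \<open>The radical has dimension at most two\<close>

lemma polar_add: "polar a b (x + y) = polar a b x + polar a b y"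
  by (simp add: polar_def sigma_add sigma_inv_add algebra_simps)

lemma polar_mult_prime_field: "c \<in> prime_field \<Longrightarrow> polar a b (c * x) = c * polar a b x"
  by (simp add: polar_def sigma_mult sigma_prime_field sigma_inv_mult sigma_inv_prime_field algebra_simps)

lemma zero_in_radical: "0 \<in> radical a b"
  by (simp add: radical_def polar_def sigma_0 sigma_inv_0)

lemma radical_add: "x \<in> radical a b \<Longrightarrow> y \<in> radical a b \<Longrightarrow> x + y \<in> radical a b"
  by (simp add: radical_def polar_add)

lemma radical_mult_prime_field: "c \<in> prime_field \<Longrightarrow> x \<in> radical a b \<Longrightarrow> c * x \<in> radical a b"
  by (simp add: radical_def polar_mult_prime_field)

(* Applying sigma to polar a b z = 0 gives a second-order linear recurrence for
   z, sigma z, sigma (sigma z); hence the radical has dimension at most 2 over F_p. *)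
lemma radical_sigma_sigma:
  assumes "b \<noteq> 0" "z \<in> radical a b"
  shows "sigma (sigma z) = - (sigma (2 * a) * sigma z + b * z) / sigma b"
proof -
  have "sigma (polar a b z) = 0"
    using assms sigma_eq_0_iff by (simp add: radical_def)
  hence "sigma (2 * a) * sigma z + sigma b * sigma (sigma z) + b * z = 0"
    by (simp add: polar_def sigma_add sigma_mult sigma_sigma_inv mult.assoc)
  moreover have "sigma b \<noteq> 0"
    using assms sigma_eq_0_iff by simp
  ultimately show ?thesis
    by (simp add: field_simps) (metis add.commute add_eq_0_iff2)
qed

definition moore :: "'a \<Rightarrow> 'a \<Rightarrow> 'a" where
  "moore x y = x * sigma y - y * sigma x"

lemma moore_sigma:
  assumes "b \<noteq> 0" "x \<in> radical a b" "y \<in> radical a b"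
  shows "sigma (moore x y) = (b / sigma b) * moore x y"
proof -
  have "sigma b \<noteq> 0"
    using assms sigma_eq_0_iff by simp
  have "sigma (moore x y) = sigma x * sigma (sigma y) - sigma y * sigma (sigma x)"
    by (simp add: moore_def sigma_diff sigma_mult)
  also have "\<dots> = (b / sigma b) * moore x y"
    unfolding radical_sigma_sigma[OF assms(1,2)] radical_sigma_sigma[OF assms(1,3)] moore_def
    using \<open>sigma b \<noteq> 0\<close> by (simp add: field_simps)
  finally show ?thesis .
qed

lemma moore_eq_0_imp_prime_field_multiple:
  assumes "z1 \<noteq> 0" "moore z1 z2 = 0"
  shows "z2 / z1 \<in> prime_field"
proof -
  have "sigma z1 \<noteq> 0"
    using assms sigma_eq_0_iff by simp
  have "z1 * sigma z2 = z2 * sigma z1"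
    using assms by (simp add: moore_def)
  hence "sigma (z2 / z1) = z2 / z1"
    using \<open>sigma z1 \<noteq> 0\<close> assms(1) by (simp add: sigma_divide field_simps)
  thus ?thesis
    by (rule sigma_fixed_imp_prime_field)
qed

lemma moore_prime_field_multiple: "e \<in> prime_field \<Longrightarrow> moore z (e * z) = 0"
  by (simp add: moore_def sigma_mult sigma_prime_field)

(* Cramer's rule with Moore determinants; by moore_sigma the coefficients are fixed by sigma. *)
lemma radical_span:
  assumes "b \<noteq> 0" "z1 \<in> radical a b" "z2 \<in> radical a b" "z3 \<in> radical a b" "moore z1 z2 \<noteq> 0"
  shows "\<exists>c\<in>prime_field. \<exists>d\<in>prime_field. z3 = c * z1 + d * z2"
proof -
  have "b / sigma b \<noteq> 0"
    using assms(1) sigma_eq_0_iff by simp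
  define c where "c = moore z3 z2 / moore z1 z2"
  define d where "d = moore z1 z3 / moore z1 z2"
  have "sigma c = c"
    unfolding c_def sigma_divide moore_sigma[OF assms(1,4,3)] moore_sigma[OF assms(1,2,3)]
    using \<open>b / sigma b \<noteq> 0\<close> by simp
  moreover have "sigma d = d"
    unfolding d_def sigma_divide moore_sigma[OF assms(1,2,4)] moore_sigma[OF assms(1,2,3)]
    using \<open>b / sigma b \<noteq> 0\<close> by simp
  moreover have "moore z1 z2 * z3 = moore z3 z2 * z1 + moore z1 z3 * z2"
    by (simp add: moore_def algebra_simps)
  hence "z3 = c * z1 + d * z2"
    using assms(5) unfolding c_def d_def by (simp add: field_simps)
  ultimately show ?thesis
    using sigma_fixed_imp_prime_field by blast
qed

lemma radical_eq_line:
  assumes "z1 \<in> radical a b" "z1 \<noteq> 0" "\<forall>z\<in>radical a b. moore z1 z = 0"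
  shows "card (radical a b) = p"
proof -
  have "radical a b = (\<lambda>c. c * z1) ` prime_field"
  proof
    show "radical a b \<subseteq> (\<lambda>c. c * z1) ` prime_field"
    proof
      fix z assume "z \<in> radical a b"
      hence "z / z1 \<in> prime_field"
        using assms by (intro moore_eq_0_imp_prime_field_multiple) auto
      moreover have "z = (z / z1) * z1"
        using assms(2) by simp
      ultimately show "z \<in> (\<lambda>c. c * z1) ` prime_field"
        by blast
    qed
    show "(\<lambda>c. c * z1) ` prime_field \<subseteq> radical a b"
      using radical_mult_prime_field[OF _ assms(1)] by auto
  qed
  moreover have "inj_on (\<lambda>c. c * z1) prime_field"
    using assms(2) by (auto simp: inj_on_def)
  ultimately show ?thesis
    using card_prime_field by (simp add: card_image)
qed

lemma radical_eq_plane: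
  assumes "b \<noteq> 0" "z1 \<in> radical a b" "z2 \<in> radical a b" "moore z1 z2 \<noteq> 0"
  shows "card (radical a b) = p ^ 2"
proof -
  let ?f = "\<lambda>(c, d). c * z1 + d * z2"
  have "radical a b = ?f ` (prime_field \<times> prime_field)"
  proof
    show "radical a b \<subseteq> ?f ` (prime_field \<times> prime_field)"
    proof
      fix z assume "z \<in> radical a b"
      then obtain c d where "c \<in> prime_field" "d \<in> prime_field" "z = c * z1 + d * z2"
        using radical_span[OF assms(1-3) _ assms(4)] by blast
      thus "z \<in> ?f ` (prime_field \<times> prime_field)"
        by (intro image_eqI[of _ _ "(c, d)"]) simp_all
    qed
    show "?f ` (prime_field \<times> prime_field) \<subseteq> radical a b"
      using assms(2,3) by (auto intro!: radical_add radical_mult_prime_field)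
  qed
  moreover have "inj_on ?f (prime_field \<times> prime_field)"
  proof (rule inj_onI, clarify)
    fix c d c' d'
    assume F: "c \<in> prime_field" "d \<in> prime_field" "c' \<in> prime_field" "d' \<in> prime_field"
      and eq: "c * z1 + d * z2 = c' * z1 + d' * z2"
    show "c = c' \<and> d = d'"
    proof (cases "d = d'")
      case True
      thus ?thesis
        using eq assms(4) by (auto simp: moore_def sigma_0)
    next
      case False
      hence z2_eq: "z2 = ((c' - c) / (d - d')) * z1"
        using eq by (simp add: field_simps)
      have "(c' - c) / (d - d') \<in> prime_field"
        using F by (intro prime_field_divide prime_field_diff)
      hence "moore z1 z2 = 0"
        unfolding z2_eq by (rule moore_prime_field_multiple)
      thus ?thesis
        using assms(4) by simp
    qed
  qed
  ultimately show ?thesis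
    by (simp add: card_image card_cartesian_product card_prime_field power2_eq_square)
qed

lemma card_radical:
  assumes "b \<noteq> 0"
  shows "card (radical a b) \<in> {1, p, p ^ 2}"
proof (cases "radical a b = {0}")
  case False
  then obtain z1 where "z1 \<in> radical a b" "z1 \<noteq> 0"
    using zero_in_radical by blast
  thus ?thesis
    using radical_eq_line radical_eq_plane assms by blast
qed simp

lemma weil_sum_mult_square:
  assumes "c \<in> prime_field_units"
  shows "weil_sum (c ^ 2 * a) (c ^ 2 * b) = weil_sum a b"
proof -
  have "c \<in> prime_field" "c \<noteq> 0"
    using assms by (auto simp: prime_field_units_def)
  hence "qform (c ^ 2 * a) (c ^ 2 * b) x = qform a b (c * x)" for x
    by (simp add: qform_sigma sigma_mult sigma_prime_field power2_eq_square algebra_simps)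
  hence "weil_sum (c ^ 2 * a) (c ^ 2 * b) = (\<Sum>x\<in>UNIV. psi (qform a b (c * x)))"
    by (simp add: weil_sum_def)
  also have "\<dots> = weil_sum a b"
    unfolding weil_sum_def
    by (rule sum.reindex_bij_witness[of _ "\<lambda>y. y / c" "\<lambda>y. c * y"]) (use \<open>c \<noteq> 0\<close> in auto)
  finally show ?thesis .
qed

(* Q(e x + f w) + Q(-f x + e w) = (e^2 + f^2) (Q x + Q w) for e, f in F_p, so rotating the
   pair (x, w) in S(a, b)^2 rescales the coefficients by e^2 + f^2. *)
lemma weil_sum_rotation:
  assumes "e \<in> prime_field" "f \<in> prime_field" "e ^ 2 + f ^ 2 \<noteq> 0"
  shows "weil_sum a b ^ 2 = weil_sum ((e ^ 2 + f ^ 2) * a) ((e ^ 2 + f ^ 2) * b) ^ 2"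
proof -
  define t where "t = e ^ 2 + f ^ 2"
  have square: "weil_sum a' b' ^ 2 = (\<Sum>(x, w)\<in>UNIV. psi (qform a' b' x + qform a' b' w))" for a' b'
    by (simp add: power2_eq_square weil_sum_def sum_product psi_add sum.cartesian_product)
  have rotate: "qform a b (e * x + f * w) + qform a b (- f * x + e * w) = qform (t * a) (t * b) x + qform (t * a) (t * b) w"
    for x w
  proof -
    have "sigma (e * x + f * w) = e * sigma x + f * sigma w"
      using assms by (simp add: sigma_add sigma_mult sigma_prime_field)
    moreover have "sigma (- f * x + e * w) = - f * sigma x + e * sigma w"
      using assms sigma_add[of "- f * x" "e * w"] by (simp add: sigma_mult sigma_prime_field sigma_uminus)
    ultimately show ?thesis
      unfolding qform_sigma by (simp only:) (simp add: t_def power2_eq_square algebra_simps)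
  qed
  define Phi where "Phi = (\<lambda>(x::'a, w::'a). (e * x + f * w, - f * x + e * w))"
  define Psi where "Psi = (\<lambda>(x::'a, w::'a). ((e * x - f * w) / t, (f * x + e * w) / t))"
  have "Phi (Psi z) = z" "Psi (Phi z) = z" for z
    by (cases z, simp only: Phi_def Psi_def case_prod_conv t_def rotation_inverse[OF assms(3)])+
  define G where "G = (\<lambda>(x, w). psi (qform a b x + qform a b w))"
  have "(\<Sum>z\<in>UNIV. G z) = (\<Sum>z\<in>UNIV. G (Phi z))"
    by (rule sum.reindex_bij_witness[of _ Phi Psi]) (simp_all add: \<open>\<And>z. Phi (Psi z) = z\<close> \<open>\<And>z. Psi (Phi z) = z\<close>)
  also have "\<dots> = (\<Sum>(x, w)\<in>UNIV. psi (qform (t * a) (t * b) x + qform (t * a) (t * b) w))"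
    by (simp only: G_def Phi_def case_prod_beta prod.sel rotate) (simp add: case_prod_beta)
  finally show ?thesis
    by (simp add: square G_def t_def case_prod_beta)
qed


section \<open>The values of D(u, v)\<close>

lemma Dsum_eq_sum_weil_sum: "Dsum p m k u (v::'a) = (\<Sum>y\<in>prime_field_units. weil_sum (y * u) (y * v))"
proof -
  have "Dsum p m k u v = (\<Sum>y\<in>{1..<p}. weil_sum (of_nat y * u) (of_nat y * v))"
    unfolding Dsum_def weil_sum_def qform_def
    by (intro sum.cong refl) (simp add: zeta_power_mult_trace_nat algebra_simps)
  also have "\<dots> = (\<Sum>y\<in>prime_field_units. weil_sum (y * u) (y * v))"
    unfolding prime_field_units_eq
    by (rule sum.reindex[symmetric, unfolded comp_def]) (rule inj_on_subset[OF inj_on_of_nat], auto)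
  finally show ?thesis .
qed

(* S(y u, y v) depends only on the square class of y, and each class has (p - 1)/2 elements. *)
lemma double_Dsum_eq_weil_sums:
  assumes n: "n \<in> prime_field_units - prime_field_squares"
  shows "2 * Dsum p m k u v = of_nat (p - 1) * (weil_sum u v + weil_sum (n * u) (n * v))"
proof -
  let ?Sq = "prime_field_squares" and ?S = "\<lambda>y. weil_sum (y * u) (y * v)"
  have "(\<Sum>y\<in>?Sq. ?S y) = (\<Sum>y\<in>?Sq. weil_sum u v)"
    by (intro sum.cong refl) (auto simp: prime_field_squares_def weil_sum_mult_square)
  moreover have "(\<Sum>y\<in>prime_field_units - ?Sq. ?S y) = (\<Sum>s\<in>?Sq. ?S (n * s))"
  proof -
    have "n \<noteq> 0"
      using n by (simp add: prime_field_units_def)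
    hence "inj_on (\<lambda>s. n * s) ?Sq"
      by (auto simp: inj_on_def)
    thus ?thesis
      unfolding nonsquare_mult_squares[OF n, symmetric] by (rule sum.reindex_cong) simp_all
  qed
  moreover have "(\<Sum>s\<in>?Sq. ?S (n * s)) = (\<Sum>s\<in>?Sq. weil_sum (n * u) (n * v))"
  proof (intro sum.cong refl)
    fix s assume "s \<in> ?Sq"
    then obtain c where c: "c \<in> prime_field_units" "s = c ^ 2"
      by (auto simp: prime_field_squares_def)
    have "?S (n * s) = weil_sum (c ^ 2 * (n * u)) (c ^ 2 * (n * v))"
      using c(2) by (simp add: mult_ac)
    thus "?S (n * s) = weil_sum (n * u) (n * v)"
      using weil_sum_mult_square[OF c(1)] by simp
  qed
  ultimately have "Dsum p m k u v = of_nat (card ?Sq) * (weil_sum u v + weil_sum (n * u) (n * v))"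
    unfolding Dsum_eq_sum_weil_sum
    using sum.subset_diff[OF prime_field_squares_subset, of ?S] by (simp add: algebra_simps)
  moreover have "(of_nat (p - 1) :: complex) = 2 * of_nat (card ?Sq)"
    unfolding card_prime_field_squares[symmetric] by simp
  ultimately show ?thesis
    by simp
qed

lemma weil_sum_units_mult_square:
  assumes "y \<in> prime_field_units"
  shows "weil_sum (y * a) (y * b) ^ 2 = weil_sum a b ^ 2"
proof -
  have "y \<in> prime_field" "y \<noteq> 0"
    using assms by (auto simp: prime_field_units_def)
  then obtain e f where ef: "e \<in> prime_field" "f \<in> prime_field" "y = e ^ 2 + f ^ 2"
    using prime_field_sum_two_squares by blast
  have "weil_sum a b ^ 2 = weil_sum ((e ^ 2 + f ^ 2) * a) ((e ^ 2 + f ^ 2) * b) ^ 2"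
    using ef \<open>y \<noteq> 0\<close> by (intro weil_sum_rotation) simp_all
  thus ?thesis
    unfolding ef(3) by (rule sym)
qed

(* -1 is either a square or n times a square, so S(-a, -b) = S(a, b) and weil_sum_norm applies. *)
lemma weil_sum_square_eq_norm:
  assumes n: "n \<in> prime_field_units - prime_field_squares"
    and same: "weil_sum (n * a) (n * b) = weil_sum a b"
  shows "weil_sum a b ^ 2 = of_nat (p ^ m) * of_nat (card (radical a b))"
proof -
  have minus_one: "- 1 \<in> prime_field_units"
    using prime_field_1 by (simp add: prime_field_units_def prime_field_uminus)
  have "weil_sum (- a) (- b) = weil_sum a b"
  proof (cases "- 1 \<in> prime_field_squares")
    case True
    then obtain c where c: "c \<in> prime_field_units" "- 1 = c ^ 2"
      by (auto simp: prime_field_squares_def)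
    hence "c ^ 2 * a = - a" "c ^ 2 * b = - b"
      by (simp_all flip: c(2))
    thus ?thesis
      using weil_sum_mult_square[OF c(1), of a b] by simp
  next
    case False
    hence "- 1 \<in> (\<lambda>s. n * s) ` prime_field_squares"
      using minus_one nonsquare_mult_squares[OF n] by blast
    then obtain c where c: "c \<in> prime_field_units" "- 1 = n * c ^ 2"
      by (auto simp: prime_field_squares_def)
    have "c ^ 2 * (n * a) = (n * c ^ 2) * a" "c ^ 2 * (n * b) = (n * c ^ 2) * b"
      by (simp_all add: mult_ac)
    hence "c ^ 2 * (n * a) = - a" "c ^ 2 * (n * b) = - b"
      by (simp_all flip: c(2))
    thus ?thesis
      using weil_sum_mult_square[OF c(1), of "n * a" "n * b"] same by simp
  qed
  thus ?thesis
    using weil_sum_norm[of a b] by (simp add: power2_eq_square)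
qed

lemma Dsum_values:
  fixes u v :: 'a
  assumes "v \<noteq> 0"
  shows "Dsum p m k u v \<in> {0, of_nat ((p - 1) * p ^ ((m + 1) div 2)), - of_nat ((p - 1) * p ^ ((m + 1) div 2))}"
proof -
  obtain n where n: "n \<in> prime_field_units - prime_field_squares"
    using exists_nonsquare by blast
  have "n \<in> prime_field_units"
    using n by simp
  hence "weil_sum (n * u) (n * v) = weil_sum u v \<or> weil_sum (n * u) (n * v) = - weil_sum u v"
    using weil_sum_units_mult_square[of n u v] by (auto simp: power2_eq_iff)
  thus ?thesis
  proof
    assume same: "weil_sum (n * u) (n * v) = weil_sum u v"
    hence D_eq: "Dsum p m k u v = of_nat (p - 1) * weil_sum u v"
      using double_Dsum_eq_weil_sums[OF n, of u v] by (simp add: algebra_simps)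
    obtain Z where Z: "Dsum p m k u v = of_int Z"
      using Dsum_in_Ints by (blast elim: Ints_cases)
    have "(of_int (Z ^ 2) :: complex) = Dsum p m k u v ^ 2"
      using Z by simp
    also have "\<dots> = of_nat (p - 1) ^ 2 * weil_sum u v ^ 2"
      using D_eq by (simp add: power_mult_distrib)
    also have "\<dots> = of_nat (p - 1) ^ 2 * (of_nat (p ^ m) * of_nat (card (radical u v)))"
      using weil_sum_square_eq_norm[OF n same] by simp
    also have "\<dots> = of_int ((int p - 1) ^ 2 * int p ^ m * int (card (radical u v)))"
      using p_gt_1 by simp
    finally have "Z ^ 2 = (int p - 1) ^ 2 * int p ^ m * int (card (radical u v))"
      by (simp only: of_int_eq_iff)
    hence "Z = (int p - 1) * int p ^ ((m + 1) div 2) \<or> Z = - ((int p - 1) * int p ^ ((m + 1) div 2))"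
      using square_eq_odd_power_cases prime_p odd_m card_radical[OF assms] by blast
    moreover have "of_int ((int p - 1) * int p ^ ((m + 1) div 2)) = (of_nat ((p - 1) * p ^ ((m + 1) div 2)) :: complex)"
      using p_gt_1 by (simp add: of_nat_diff)
    ultimately show ?thesis
      using Z by (metis insert_iff of_int_minus)
  next
    assume "weil_sum (n * u) (n * v) = - weil_sum u v"
    thus ?thesis
      using double_Dsum_eq_weil_sums[OF n, of u v] by simp
  qed
qed


section \<open>The first two moments\<close>

definition Dsum_term :: "'a \<Rightarrow> 'a \<times> 'a \<Rightarrow> 'a \<Rightarrow> complex" where
  "Dsum_term v yx u = psi (fst yx * u * snd yx ^ 2 + fst yx * v * snd yx ^ (p ^ k + 1))"

lemma Dsum_eq_sum_Dsum_term:
  "Dsum p m k u v = (\<Sum>yx\<in>prime_field_units \<times> UNIV. Dsum_term v yx u)"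
  by (simp add: Dsum_eq_sum_weil_sum weil_sum_def qform_def Dsum_term_def mult.assoc sum.cartesian_product
                case_prod_beta)

lemma sum_Dsum_term:
  assumes "y \<in> prime_field_units"
  shows "(\<Sum>u\<in>UNIV. Dsum_term v (y, x) u) = (if x = 0 then of_nat (p ^ m) else 0)"
proof -
  have "(\<Sum>u\<in>UNIV. Dsum_term v (y, x) u)
      = psi (y * v * x ^ (p ^ k + 1)) * (\<Sum>u\<in>UNIV. psi ((y * x ^ 2) * u))"
    by (simp add: Dsum_term_def sum_distrib_left psi_add[symmetric] algebra_simps)
  thus ?thesis
    using assms by (simp add: sum_psi_mult psi_0 prime_field_units_def)
qed

lemma sum_Dsum: "(\<Sum>u\<in>UNIV. Dsum p m k u (v::'a)) = of_nat ((p - 1) * p ^ m)"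
proof -
  have "(\<Sum>u\<in>UNIV. Dsum p m k u v) = (\<Sum>yx\<in>prime_field_units \<times> UNIV. \<Sum>u\<in>UNIV. Dsum_term v yx u)"
    unfolding Dsum_eq_sum_Dsum_term by (rule sum.swap)
  also have "\<dots> = (\<Sum>yx\<in>prime_field_units \<times> (UNIV :: 'a set). if snd yx = 0 then of_nat (p ^ m) else 0)"
    by (rule sum.cong[OF refl]) (clarsimp simp: sum_Dsum_term)
  also have "\<dots> = (\<Sum>yx\<in>prime_field_units \<times> {0 :: 'a}. of_nat (p ^ m))"
    by (rule sum.mono_neutral_cong_right) auto
  finally show ?thesis
    by (simp add: card_cartesian_product card_prime_field_units)
qed

lemma ratio_prime_field_if_sum_squares_eq_0:
  assumes "y1 \<in> prime_field_units" "y2 \<in> prime_field_units" "x2 \<noteq> 0"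
    and "y1 * x1 ^ 2 + y2 * x2 ^ 2 = 0"
  shows "x1 / x2 \<in> prime_field" and "y1 * (x1 / x2) ^ 2 + y2 = 0"
proof -
  have "(y1 * (x1 / x2) ^ 2 + y2) * x2 ^ 2 = y1 * x1 ^ 2 + y2 * x2 ^ 2"
    using assms(3) by (simp add: algebra_simps power_divide)
  thus eq: "y1 * (x1 / x2) ^ 2 + y2 = 0"
    using assms(3,4) by simp
  have "y1 \<noteq> 0"
    using assms(1) by (simp add: prime_field_units_def)
  moreover have "y1 * (x1 / x2) ^ 2 = - y2"
    using eq by (simp add: eq_neg_iff_add_eq_0)
  ultimately have "(x1 / x2) ^ 2 = - y2 / y1"
    by (metis nonzero_mult_div_cancel_left)
  moreover have "- y2 / y1 \<in> prime_field"
    using assms(1,2) by (simp add: prime_field_units_def prime_field_uminus prime_field_divide)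
  ultimately show "x1 / x2 \<in> prime_field"
    using prime_field_square_root[OF odd_m] by simp
qed

lemma sum_squares_eq_0_imp_sum_powers_eq_0:
  assumes "y1 \<in> prime_field_units" "y2 \<in> prime_field_units" "y1 * x1 ^ 2 + y2 * x2 ^ 2 = 0"
  shows "y1 * x1 ^ (p ^ k + 1) + y2 * x2 ^ (p ^ k + 1) = 0"
proof (cases "x2 = 0")
  case True
  thus ?thesis
    using assms by (simp add: prime_field_units_def)
next
  case False
  define c where "c = x1 / x2"
  have "c \<in> prime_field" and c_eq: "y1 * c ^ 2 + y2 = 0"
    unfolding c_def using ratio_prime_field_if_sum_squares_eq_0[OF assms(1,2) False assms(3)] by simp_all
  have "x1 = c * x2"
    using False by (simp add: c_def)
  hence "x1 ^ (p ^ k + 1) = c ^ 2 * x2 ^ (p ^ k + 1)"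
    using power_p_power_prime_field[OF \<open>c \<in> prime_field\<close>, of k]
    by (simp add: power_mult_distrib power_add power2_eq_square)
  hence "y1 * x1 ^ (p ^ k + 1) + y2 * x2 ^ (p ^ k + 1) = (y1 * c ^ 2 + y2) * x2 ^ (p ^ k + 1)"
    by (simp add: algebra_simps)
  thus ?thesis
    using c_eq by simp
qed

lemma sum_Dsum_term_product:
  assumes "y1 \<in> prime_field_units" "y2 \<in> prime_field_units"
  shows "(\<Sum>u\<in>UNIV. Dsum_term v (y1, x1) u * Dsum_term v (y2, x2) u)
       = (if y1 * x1 ^ 2 + y2 * x2 ^ 2 = 0 then of_nat (p ^ m) else 0)"
proof -
  have "(\<Sum>u\<in>UNIV. Dsum_term v (y1, x1) u * Dsum_term v (y2, x2) u)
      = (\<Sum>u\<in>UNIV. psi (v * (y1 * x1 ^ (p ^ k + 1) + y2 * x2 ^ (p ^ k + 1))) *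
                      psi ((y1 * x1 ^ 2 + y2 * x2 ^ 2) * u))"
    by (intro sum.cong refl) (simp add: Dsum_term_def psi_add[symmetric] algebra_simps)
  also have "\<dots> = psi (v * (y1 * x1 ^ (p ^ k + 1) + y2 * x2 ^ (p ^ k + 1))) *
                  (\<Sum>u\<in>UNIV. psi ((y1 * x1 ^ 2 + y2 * x2 ^ 2) * u))"
    by (simp add: sum_distrib_left)
  finally show ?thesis
    using sum_squares_eq_0_imp_sum_powers_eq_0[OF assms, of x1 x2] by (simp add: sum_psi_mult psi_0)
qed

lemma card_sum_squares_eq_0:
  assumes "y1 \<in> prime_field_units"
  shows "card {yx \<in> prime_field_units \<times> UNIV. y1 * x1 ^ 2 + fst yx * snd yx ^ 2 = 0} = p - 1"
proof (cases "x1 = 0")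
  case True
  hence "{yx \<in> prime_field_units \<times> UNIV. y1 * x1 ^ 2 + fst yx * snd yx ^ 2 = 0} = prime_field_units \<times> {0}"
    by (auto simp: prime_field_units_def)
  thus ?thesis
    by (simp add: card_cartesian_product card_prime_field_units)
next
  case False
  let ?f = "\<lambda>c. (- y1 * c ^ 2, x1 / c)"
  have "{yx \<in> prime_field_units \<times> UNIV. y1 * x1 ^ 2 + fst yx * snd yx ^ 2 = 0} = ?f ` prime_field_units"
  proof (intro equalityI subsetI)
    fix yx assume "yx \<in> ?f ` prime_field_units"
    then obtain c where c: "c \<in> prime_field_units" "yx = ?f c"
      by blast
    have "- y1 * c ^ 2 \<in> prime_field_units"
      using c assms by (simp add: power2_eq_square prime_field_units_mult prime_field_units_uminus)
    moreover have "c \<noteq> 0"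
      using c by (simp add: prime_field_units_def)
    ultimately show "yx \<in> {yx \<in> prime_field_units \<times> UNIV. y1 * x1 ^ 2 + fst yx * snd yx ^ 2 = 0}"
      using c by (simp add: power_divide)
  next
    fix yx assume "yx \<in> {yx \<in> prime_field_units \<times> UNIV. y1 * x1 ^ 2 + fst yx * snd yx ^ 2 = 0}"
    then obtain y2 x2 where yx: "yx = (y2, x2)" "y2 \<in> prime_field_units" "y1 * x1 ^ 2 + y2 * x2 ^ 2 = 0"
      by auto
    have "x2 \<noteq> 0"
      using yx False assms by (auto simp: prime_field_units_def)
    let ?c = "x1 / x2"
    have "?c \<in> prime_field" "y1 * ?c ^ 2 + y2 = 0"
      using ratio_prime_field_if_sum_squares_eq_0[OF assms yx(2) \<open>x2 \<noteq> 0\<close> yx(3)] by simp_all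
    moreover have "?c \<noteq> 0"
      using False \<open>x2 \<noteq> 0\<close> by simp
    ultimately show "yx \<in> ?f ` prime_field_units"
      using yx(1) \<open>x2 \<noteq> 0\<close>
      by (intro image_eqI[of _ _ ?c]) (auto simp: prime_field_units_def eq_neg_iff_add_eq_0 add.commute)
  qed
  moreover have "inj_on ?f prime_field_units"
    using False by (auto simp: inj_on_def)
  ultimately show ?thesis
    by (simp add: card_image card_prime_field_units)
qed

lemma sum_Dsum_squared: "(\<Sum>u\<in>UNIV. Dsum p m k u (v::'a) ^ 2) = of_nat ((p - 1) ^ 2 * p ^ (2 * m))"
proof -
  let ?I = "prime_field_units \<times> (UNIV :: 'a set)"
  let ?C = "\<lambda>a b. fst a * snd a ^ 2 + fst b * snd b ^ 2 = (0::'a)"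
  have "(\<Sum>u\<in>UNIV. Dsum p m k u v ^ 2) = (\<Sum>a\<in>?I. \<Sum>b\<in>?I. \<Sum>u\<in>UNIV. Dsum_term v a u * Dsum_term v b u)"
    unfolding Dsum_eq_sum_Dsum_term power2_eq_square sum_product
    by (subst sum.swap) (simp add: sum.swap[of _ UNIV])
  also have "\<dots> = (\<Sum>a\<in>?I. \<Sum>b\<in>?I. if ?C a b then of_nat (p ^ m) else 0)"
    by (intro sum.cong refl) (auto simp: sum_Dsum_term_product)
  also have "\<dots> = (\<Sum>a\<in>?I. of_nat (card {b \<in> ?I. ?C a b}) * of_nat (p ^ m))"
    by (simp add: sum.inter_filter[symmetric])
  also have "\<dots> = (\<Sum>a\<in>?I. of_nat (p - 1) * of_nat (p ^ m))"
    by (intro sum.cong refl) (auto simp: card_sum_squares_eq_0)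
  also have "\<dots> = of_nat ((p - 1) * p ^ m * ((p - 1) * p ^ m))"
    by (simp add: card_cartesian_product card_prime_field_units card_field)
  also have "(p - 1) * p ^ m * ((p - 1) * p ^ m) = (p - 1) ^ 2 * p ^ (2 * m)"
    by (simp add: power2_eq_square mult_ac flip: power_add mult_2)
  finally show ?thesis .
qed

end

theorem lemma3p4:
  fixes p m k :: nat and v :: "'a::{field,finite}"
  assumes "prime p" and "odd p" and "odd m" and "m \<ge> 3" and "k \<ge> 1"
    and "coprime m k" and "CARD('a) = p ^ m" and "v \<noteq> 0"
  shows "(\<forall>u::'a. Dsum p m k u v \<in>
            {0, of_nat ((p - 1) * p ^ ((m + 1) div 2)), - of_nat ((p - 1) * p ^ ((m + 1) div 2))})
       \<and> card {u::'a. Dsum p m k u v = 0} = p ^ m - p ^ (m - 1)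
       \<and> card {u::'a. Dsum p m k u v = of_nat ((p - 1) * p ^ ((m + 1) div 2))}
            = (p ^ (m - 1) + p ^ ((m - 1) div 2)) div 2
       \<and> card {u::'a. Dsum p m k u v = - of_nat ((p - 1) * p ^ ((m + 1) div 2))}
            = (p ^ (m - 1) - p ^ ((m - 1) div 2)) div 2"
proof -
  interpret quadratic_trace_form p m k
    using assms by unfold_locales auto
  define h where "h = (m + 1) div 2"
  define g where "g = (m - 1) div 2"
  have "m = h + g" "2 * m = 2 * h + 2 * g" "2 * g = m - 1"
    using assms(3,4) unfolding h_def g_def by presburger+
  let ?A = "of_nat ((p - 1) * p ^ h) :: complex"
  let ?D = "\<lambda>u. Dsum p m k u v"
  have "(p - 1) * p ^ m = (p - 1) * p ^ h * p ^ g"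
    unfolding \<open>m = h + g\<close> by (simp add: power_add)
  hence "(\<Sum>u\<in>UNIV. ?D u) = ?A * of_nat (p ^ g)"
    using sum_Dsum[of v] by (simp only:) simp
  moreover have "(p - 1) ^ 2 * p ^ (2 * m) = ((p - 1) * p ^ h) ^ 2 * p ^ (2 * g)"
    unfolding \<open>2 * m = 2 * h + 2 * g\<close> by (simp add: power_add power_even_eq power_mult_distrib)
  hence "(\<Sum>u\<in>UNIV. ?D u ^ 2) = ?A ^ 2 * of_nat (p ^ (2 * g))"
    using sum_Dsum_squared[of v] by (simp only:) simp
  moreover have "?A \<noteq> 0"
    using p_gt_1 by simp
  ultimately have "card {u. ?D u = ?A} = card {u. ?D u = - ?A} + p ^ g"
      "card {u. ?D u = ?A} + card {u. ?D u = - ?A} = p ^ (m - 1)"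
      "card {u. ?D u = 0} = p ^ m - p ^ (m - 1)"
    using three_valued_sum_card[of UNIV ?A ?D] Dsum_values[OF assms(8)] card_field \<open>2 * g = m - 1\<close>
    by (simp_all add: h_def)
  moreover have "P = (t + s) div 2 \<and> M = (t - s) div 2" if "P = M + s" "P + M = t" for P M s t :: nat
    using that by presburger
  ultimately show ?thesis
    using Dsum_values[OF assms(8)] by (simp add: h_def g_def)
qed

end
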